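(* Let $f$ be the two-layer network below with scaling $b>0$ and let $R>0$. Let $x_1,\dots,x_T\in\mathbb{S}_p$ and let $\ell_1,\dots,\ell_T:\mathbb{R}^d\to\mathbb{R}$ be convex, differentiable and $L$-Lipschitz, and write $\ell_t(\theta)=\ell_t(f(\theta;x_t))$. Then Algorithm 1 with step sizes $\eta_t=\frac{2Rb}{CL\sqrt m}\,t^{-1/2}$ satisfies $$\sum_{t=1}^T\ell_t(\theta_t)\le\min_{\theta\in B(R)}\sum_{t=1}^T\ell_t(\theta)+\frac{3CLR\sqrt{mT}}{b}+\frac{2CLR^2}{b}T.$$
   Context: Let $p,d\ge1$, $m$ an even positive integer, $b>0$, $C>0$, and $\mathbb{S}_p=\{x\in\mathbb{R}^p:\|x\|_2=1\}$. Let $\sigma:\mathbb{R}\to\mathbb{R}$ be differentiable with $|\sigma'(z)-\sigma'(z')|\le C|z-z'|$ and $|\sigma'(z)|\le C$ for all $z,z'$. Parameters are $\theta=(\theta[1],\dots,\theta[d])\in\mathbb{R}^{d\times m\times p}$, where $\theta[i]\in\mathbb{R}^{m\times p}$ has rows $\theta[i,1]^\top,\dots,\theta[i,m/2]^\top,\bar\theta[i,1]^\top,\dots,\bar\theta[i,m/2]^\top$. The two-layer network is $f(\theta;x)=(f_1(\theta[1];x),\dots,f_d(\theta[d];x))^\top$ with $f_i(\theta[i];x)=\frac1b\big(\sum_{r=1}^{m/2}a_{i,r}\sigma(\theta[i,r]^\top x)+\sum_{r=1}^{m/2}\bar a_{i,r}\sigma(\bar\theta[i,r]^\top x)\big)$,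 where the $a_{i,r}$ are independent uniform signs in $\{\pm1\}$ and $\bar a_{i,r}=-a_{i,r}$, fixed (not trained). The random initialization $\theta_1$ has $\theta_1[i,r]\sim\mathcal N(0,I_p)$ i.i.d. for $r\le m/2$ and $\bar\theta_1[i,r]=\theta_1[i,r]$. $B(R)=\{\theta:\|\theta-\theta_1\|_F\le R\}$. Algorithm 1 (OGD for neural networks): start at $\theta_1$; at round $t$ play $\theta_t$, receive $x_t$ and $\ell_t$, and update $\theta_{t+1}=\Pi_{B(R)}(\theta_t-\eta_t\nabla_\theta\ell_t(f(\theta_t;x_t)))$, where $\Pi_{B(R)}$ is Frobenius-norm projection onto $B(R)$. *)

theory Defs
  imports "HOL-Analysis.Analysis"
begin

text \<open>Parameters theta in R^(d x m x p) are elements of real^'p^('h \<times> bool)^'d.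
 Row index (r,True) stands for theta[i,r], (r,False) for bar-theta[i,r]; m = 2 * CARD('h).
 The Euclidean norm on this type is the Frobenius norm.\<close>

type_synonym ('p,'h,'d) params = "real^'p^('h \<times> bool)^'d"

definition net :: "real \<Rightarrow> (real \<Rightarrow> real) \<Rightarrow> real^('h::finite \<times> bool)^'d \<Rightarrow>
    ('p::finite,'h,'d::finite) params \<Rightarrow> real^'p \<Rightarrow> real^'d" where
  "net b \<sigma> a \<theta> x = (\<chi> i. (1 / b) * (\<Sum>r\<in>UNIV. a$i$r * \<sigma> ((\<theta>$i$r) \<bullet> x)))"

definition grad :: "('a::real_inner \<Rightarrow> real) \<Rightarrow> 'a \<Rightarrow> 'a" where
  "grad F \<theta> = (SOME G. (F has_derivative (\<lambda>h. G \<bullet> h)) (at \<theta>))"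

end

theory Submission
  imports Defs
begin

text \<open>
  With smooth activations the network is almost linear in its parameters near any point: its
  second-order remainder is at most \<open>C s\<^sup>2 \<parallel>h\<parallel>\<^sup>2 / (2 b)\<close>, uniformly in the input on the sphere and in
  the dimensions. Composing with a convex \<open>L\<close>-Lipschitz loss therefore gives a function that
  satisfies the gradient inequality of a convex function up to \<open>L C \<parallel>\<theta> - \<theta>\<^sub>t\<parallel>\<^sup>2 / (2 b)\<close>, which on a
  ball of radius \<open>R\<close> is at most \<open>2 C L R\<^sup>2 / b\<close> per round. Moreover the network is
  \<open>C \<surd>m / b\<close>-Lipschitz, so the gradients are bounded by \<open>G = C L \<surd>m / b\<close>. The usual analysis of
  projected online gradient descent with step sizes \<open>2 R / (G \<surd>t)\<close> bounds the linearised regret by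
  \<open>(3/2) (2 R) G \<surd>T\<close>, and summing the per-round errors gives the theorem.
\<close>

lemma abs_diff_le_half_sq_of_deriv_le:
  fixes g g' :: "real \<Rightarrow> real"
  assumes "\<And>t. (g has_real_derivative g' t) (at t)" and "\<And>t. \<bar>g' t\<bar> \<le> K * \<bar>t\<bar>"
  shows "\<bar>g w - g 0\<bar> \<le> K / 2 * w\<^sup>2"
proof -
  have nonneg: "\<bar>f v - f 0\<bar> \<le> K / 2 * v\<^sup>2"
    if v: "0 \<le> v" and f: "\<And>t. (f has_real_derivative f' t) (at t)" "\<And>t. \<bar>f' t\<bar> \<le> K * \<bar>t\<bar>"
    for f f' :: "real \<Rightarrow> real" and v
  proof -
    have "f v - K / 2 * v\<^sup>2 \<le> f 0 - K / 2 * 0\<^sup>2"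
    proof (rule DERIV_nonpos_imp_nonincreasing[OF v])
      fix t :: real assume "0 \<le> t"
      then show "\<exists>y. ((\<lambda>t. f t - K / 2 * t\<^sup>2) has_real_derivative y) (at t) \<and> y \<le> 0"
        using f(2)[of t]
        by (intro exI[of _ "f' t - K * t"] conjI derivative_eq_intros) (auto simp: abs_le_iff f(1))
    qed
    moreover have "f 0 + K / 2 * 0\<^sup>2 \<le> f v + K / 2 * v\<^sup>2"
    proof (rule DERIV_nonneg_imp_nondecreasing[OF v])
      fix t :: real assume "0 \<le> t"
      then show "\<exists>y. ((\<lambda>t. f t + K / 2 * t\<^sup>2) has_real_derivative y) (at t) \<and> y \<ge> 0"
        using f(2)[of t]
        by (intro exI[of _ "f' t + K * t"] conjI derivative_eq_intros) (auto simp: abs_le_iff f(1))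
    qed
    ultimately show ?thesis unfolding abs_le_iff by simp
  qed
  show ?thesis
  proof (cases "0 \<le> w")
    case True
    then show ?thesis using nonneg assms by blast
  next
    case False
    have "((\<lambda>t. g (- t)) has_real_derivative - g' (- t)) (at t)" for t
      using DERIV_chain2[OF assms(1) DERIV_minus[OF DERIV_ident]] by simp
    moreover have "\<bar>- g' (- t)\<bar> \<le> K * \<bar>t\<bar>" for t
      using assms(2)[of "- t"] by simp
    ultimately have "\<bar>g (- (- w)) - g (- 0)\<bar> \<le> K / 2 * (- w)\<^sup>2"
      using False by (intro nonneg) auto
    then show ?thesis by simp
  qed
qed

lemma sq_norm_vec_vec:
  fixes M :: "'a::real_normed_vector^'r::finite^'d::finite"
  shows "(norm M)\<^sup>2 = (\<Sum>i\<in>UNIV. \<Sum>r\<in>UNIV. (norm (M$i$r))\<^sup>2)"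
  by (simp add: norm_vec_def L2_set_def sum_nonneg)

lemma norm_le_of_row_sums_le:
  fixes v :: "real^'d::finite" and M :: "'a::real_normed_vector^'r::finite^'d"
  assumes row: "\<And>i. \<bar>v$i\<bar> \<le> c * (\<Sum>r\<in>UNIV. norm (M$i$r))" and c: "0 \<le> c"
  shows "norm v \<le> c * sqrt CARD('r) * norm M"
proof -
  have row_sq: "(v$i)\<^sup>2 \<le> c\<^sup>2 * (CARD('r) * (\<Sum>r\<in>UNIV. (norm (M$i$r))\<^sup>2))" for i
  proof -
    have "(v$i)\<^sup>2 \<le> (c * (\<Sum>r\<in>UNIV. norm (M$i$r)))\<^sup>2"
      using row[of i] by (metis abs_ge_zero power2_abs power_mono)
    also have "\<dots> \<le> c\<^sup>2 * (CARD('r) * (\<Sum>r\<in>UNIV. (norm (M$i$r))\<^sup>2))"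
      unfolding power_mult_distrib
      using sum_squared_le_sum_of_squares[of "\<lambda>r. norm (M$i$r)" UNIV]
      by (intro mult_left_mono) (auto simp: mult.commute)
    finally show ?thesis .
  qed
  have "(norm v)\<^sup>2 = (\<Sum>i\<in>UNIV. (v$i)\<^sup>2)"
    unfolding power2_norm_eq_inner inner_vec_def by (simp add: power2_eq_square)
  also have "\<dots> \<le> (\<Sum>i\<in>UNIV. c\<^sup>2 * (CARD('r) * (\<Sum>r\<in>UNIV. (norm (M$i$r))\<^sup>2)))"
    by (intro sum_mono row_sq)
  also have "\<dots> = c\<^sup>2 * CARD('r) * (\<Sum>i\<in>UNIV. \<Sum>r\<in>UNIV. (norm (M$i$r))\<^sup>2)"
    by (simp only: sum_distrib_left mult.assoc)
  also have "\<dots> = (c * sqrt CARD('r) * norm M)\<^sup>2"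
    unfolding power_mult_distrib sq_norm_vec_vec by simp
  finally have "(norm v)\<^sup>2 \<le> (c * sqrt CARD('r) * norm M)\<^sup>2" .
  moreover have "0 \<le> c * sqrt CARD('r) * norm M"
    using c by simp
  ultimately show ?thesis
    by (rule power2_le_imp_le)
qed

lemma chi_sum_axis: "(\<chi> i. f i) = (\<Sum>i\<in>UNIV. f i *\<^sub>R axis i (1::real))"
  by (simp add: vec_eq_iff sum_component axis_def if_distrib sum.delta cong: if_cong)

section \<open>Gradient inequalities for almost convex compositions\<close>

lemma has_derivative_grad:
  fixes F :: "'a::euclidean_space \<Rightarrow> real"
  assumes "F differentiable (at \<theta>)"
  shows "(F has_derivative (\<lambda>v. grad F \<theta> \<bullet> v)) (at \<theta>)"
proof -
  obtain F' where F': "(F has_derivative F') (at \<theta>)"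
    using assms differentiable_def by blast
  have "F' = (\<lambda>v. adjoint F' 1 \<bullet> v)"
    using adjoint_works[OF has_derivative_linear[OF F'], of _ 1] by (simp add: fun_eq_iff inner_commute)
  then have "\<exists>G. (F has_derivative (\<lambda>v. G \<bullet> v)) (at \<theta>)"
    using F' by metis
  then show ?thesis
    unfolding grad_def by (rule someI_ex)
qed

lemma inner_le_of_increment_le:
  fixes F :: "'a::real_inner \<Rightarrow> real"
  assumes d: "(F has_derivative (\<lambda>v. g \<bullet> v)) (at \<theta>)"
    and incr: "\<And>s. 0 < s \<Longrightarrow> s \<le> 1 \<Longrightarrow> F (\<theta> + s *\<^sub>R h) - F \<theta> \<le> s * c + s\<^sup>2 * k"
  shows "g \<bullet> h \<le> c"
proof -
  have line: "((\<lambda>s::real. \<theta> + s *\<^sub>R h) has_derivative (\<lambda>t. t *\<^sub>R h)) (at 0)"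
    by (auto intro!: derivative_eq_intros)
  have "((\<lambda>s. F (\<theta> + s *\<^sub>R h)) has_derivative (\<lambda>t. g \<bullet> (t *\<^sub>R h))) (at 0)"
    using has_derivative_compose[OF line, of F "\<lambda>v. g \<bullet> v"] d by (simp add: o_def)
  then have "((\<lambda>s. F (\<theta> + s *\<^sub>R h)) has_real_derivative (g \<bullet> h)) (at 0)"
    by (simp add: has_field_derivative_def mult_commute_abs)
  then have "((\<lambda>t. (F (\<theta> + t *\<^sub>R h) - F \<theta>) / t) \<longlongrightarrow> g \<bullet> h) (at 0)"
    by (simp add: DERIV_def)
  then have lim1: "((\<lambda>t. (F (\<theta> + t *\<^sub>R h) - F \<theta>) / t) \<longlongrightarrow> g \<bullet> h) (at_right 0)"
    by (rule filterlim_mono[OF _ order_refl at_le]) simp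
  have lim2: "((\<lambda>t. c + t * k) \<longlongrightarrow> c) (at_right (0::real))"
    by (auto intro!: tendsto_eq_intros)
  have ev: "eventually (\<lambda>t. (F (\<theta> + t *\<^sub>R h) - F \<theta>) / t \<le> c + t * k) (at_right 0)"
    unfolding eventually_at_right_field
  proof (intro exI[of _ 1] conjI allI impI)
    fix t :: real assume t: "0 < t" "t < 1"
    have "F (\<theta> + t *\<^sub>R h) - F \<theta> \<le> t * (c + t * k)"
      using incr[of t] t by (simp add: power2_eq_square algebra_simps)
    then show "(F (\<theta> + t *\<^sub>R h) - F \<theta>) / t \<le> c + t * k"
      using t by (simp add: divide_le_eq mult.commute)
  qed simp
  show ?thesis
    by (rule tendsto_le[OF trivial_limit_at_right_real lim2 lim1 ev])
qed

lemma norm_le_of_has_derivative_lipschitz: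
  fixes F :: "'a::real_inner \<Rightarrow> real"
  assumes F: "(F has_derivative (\<lambda>v. g \<bullet> v)) (at \<theta>)" and lip: "G-lipschitz_on UNIV F"
  shows "norm g \<le> G"
proof -
  have "g \<bullet> g \<le> G * norm g"
  proof (rule inner_le_of_increment_le[OF F, where k = 0])
    fix s :: real assume s: "0 < s" "s \<le> 1"
    have "F (\<theta> + s *\<^sub>R g) - F \<theta> \<le> G * norm (\<theta> + s *\<^sub>R g - \<theta>)"
      using lipschitz_on_normD[OF lip, of "\<theta> + s *\<^sub>R g" \<theta>] by simp
    then show "F (\<theta> + s *\<^sub>R g) - F \<theta> \<le> s * (G * norm g) + s\<^sup>2 * 0"
      using s by (simp add: mult.left_commute)
  qed
  then have "norm g * norm g \<le> G * norm g"
    by (simp add: power2_eq_square[symmetric] power2_norm_eq_inner)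
  then show ?thesis
    using lipschitz_on_nonneg[OF lip] by (cases "norm g = 0") auto
qed

lemma convex_lipschitz_comp_increment_le:
  fixes N :: "'a::real_normed_vector \<Rightarrow> 'b::real_normed_vector" and f :: "'b \<Rightarrow> real"
  assumes f: "convex_on UNIV f" "L-lipschitz_on UNIV f"
    and taylor: "\<And>s. norm (N (\<theta> + s *\<^sub>R h) - N \<theta> - s *\<^sub>R D) \<le> K * s\<^sup>2 * (norm h)\<^sup>2"
    and s: "0 < s" "s \<le> 1"
  shows "f (N (\<theta> + s *\<^sub>R h)) - f (N \<theta>)
    \<le> s * (f (N (\<theta> + h)) - f (N \<theta>) + L * K * (norm h)\<^sup>2) + s\<^sup>2 * (L * K * (norm h)\<^sup>2)"
proof -
  have L: "0 \<le> L"
    using lipschitz_on_nonneg[OF f(2)] .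
  have lip: "f u \<le> f v + L * norm (u - v)" for u v
    using lipschitz_on_normD[OF f(2), of u v] by simp
  define E where "E s = N (\<theta> + s *\<^sub>R h) - N \<theta> - s *\<^sub>R D" for s
  have "N (\<theta> + s *\<^sub>R h) = ((1 - s) *\<^sub>R N \<theta> + s *\<^sub>R (N (\<theta> + h) - E 1)) + E s"
    by (simp add: E_def algebra_simps)
  then have "f (N (\<theta> + s *\<^sub>R h)) \<le> f ((1 - s) *\<^sub>R N \<theta> + s *\<^sub>R (N (\<theta> + h) - E 1)) + L * norm (E s)"
    using lip by (metis add_diff_cancel_left')
  also have "\<dots> \<le> (1 - s) * f (N \<theta>) + s * f (N (\<theta> + h) - E 1) + L * norm (E s)"
    using s by (intro add_right_mono convex_onD[OF f(1)]) auto
  also have "\<dots> \<le> (1 - s) * f (N \<theta>) + s * (f (N (\<theta> + h)) + L * norm (E 1)) + L * norm (E s)"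
    using lip[of "N (\<theta> + h) - E 1" "N (\<theta> + h)"] s L by (intro add_mono mult_left_mono) auto
  also have "\<dots> \<le> (1 - s) * f (N \<theta>) + s * (f (N (\<theta> + h)) + L * (K * (norm h)\<^sup>2))
      + L * (K * s\<^sup>2 * (norm h)\<^sup>2)"
    using taylor[of 1] taylor[of s] s L unfolding E_def
    by (intro add_mono mult_left_mono order_refl) auto
  finally show ?thesis
    by (simp add: algebra_simps)
qed

lemma convex_lipschitz_comp_gradient_ineq:
  fixes N :: "'a::real_inner \<Rightarrow> 'b::real_normed_vector" and f :: "'b \<Rightarrow> real"
  assumes f: "convex_on UNIV f" "L-lipschitz_on UNIV f"
    and grad: "((\<lambda>\<theta>. f (N \<theta>)) has_derivative (\<lambda>v. g \<bullet> v)) (at \<theta>0)"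
    and taylor: "\<And>h s. norm (N (\<theta>0 + s *\<^sub>R h) - N \<theta>0 - s *\<^sub>R D h) \<le> K * s\<^sup>2 * (norm h)\<^sup>2"
  shows "f (N \<theta>0) - f (N \<theta>) \<le> g \<bullet> (\<theta>0 - \<theta>) + L * K * (norm (\<theta> - \<theta>0))\<^sup>2"
proof -
  define h where "h = \<theta> - \<theta>0"
  have "g \<bullet> h \<le> f (N (\<theta>0 + h)) - f (N \<theta>0) + L * K * (norm h)\<^sup>2"
    using convex_lipschitz_comp_increment_le[OF f taylor]
    by (intro inner_le_of_increment_le[OF grad, where k = "L * K * (norm h)\<^sup>2"])
  moreover have "g \<bullet> h = - (g \<bullet> (\<theta>0 - \<theta>))"
    by (simp add: h_def inner_diff_right)
  ultimately show ?thesis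
    by (simp add: h_def)
qed

section \<open>Projected online gradient descent\<close>

lemma closest_point_iterates_in:
  assumes "closed S" "S \<noteq> {}" "x 1 \<in> S" "\<And>t. 1 \<le> t \<Longrightarrow> x (Suc t) = closest_point S (y t)"
    and "1 \<le> t"
  shows "x t \<in> S"
proof (cases t)
  case (Suc t')
  then show ?thesis
    using assms closest_point_in_set[of S] by (cases "t' = 0") auto
qed (use assms in simp)

lemma closest_point_gradient_step_inner_le:
  fixes u g \<theta> :: "'a::euclidean_space"
  assumes S: "convex S" "closed S" "\<theta> \<in> S" and \<eta>: "0 < \<eta>"
  shows "g \<bullet> (u - \<theta>) \<le> ((norm (u - \<theta>))\<^sup>2 - (norm (closest_point S (u - \<eta> *\<^sub>R g) - \<theta>))\<^sup>2) / (2 * \<eta>)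
    + \<eta> / 2 * (norm g)\<^sup>2"
proof -
  have "norm (closest_point S (u - \<eta> *\<^sub>R g) - \<theta>) \<le> norm ((u - \<theta>) - \<eta> *\<^sub>R g)"
    using closest_point_lipschitz[OF S(1,2), of "u - \<eta> *\<^sub>R g" \<theta>] closest_point_self[OF S(3)] S(3)
    by (auto simp: dist_norm algebra_simps)
  then have "(norm (closest_point S (u - \<eta> *\<^sub>R g) - \<theta>))\<^sup>2 \<le> (norm ((u - \<theta>) - \<eta> *\<^sub>R g))\<^sup>2"
    by (simp add: power_mono)
  also have "\<dots> = (norm (u - \<theta>))\<^sup>2 - 2 * \<eta> * (g \<bullet> (u - \<theta>)) + \<eta>\<^sup>2 * (norm g)\<^sup>2"
    unfolding power2_norm_eq_inner
    by (simp add: inner_diff_left inner_diff_right inner_commute power2_eq_square algebra_simps)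
  finally show ?thesis
    using \<eta> by (simp add: field_simps power2_eq_square)
qed

lemma sum_inv_sqrt_le: "(\<Sum>t=1..T. 1 / sqrt (real t)) \<le> 2 * sqrt (real T)"
proof (induction T)
  case (Suc T)
  have "1 = (sqrt (Suc T) - sqrt T) * (sqrt (Suc T) + sqrt T)"
    by (simp add: algebra_simps)
  also have "\<dots> \<le> (sqrt (Suc T) - sqrt T) * (2 * sqrt (Suc T))"
    by (intro mult_left_mono) auto
  finally have "1 \<le> (2 * sqrt (Suc T) - 2 * sqrt T) * sqrt (Suc T)"
    by (simp add: algebra_simps)
  then have "1 / sqrt (Suc T) \<le> 2 * sqrt (Suc T) - 2 * sqrt T"
    by (simp add: divide_le_eq)
  then show ?case
    using Suc by simp
qed simp

lemma sum_diff_mult_sqrt_le: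
  fixes A :: "nat \<Rightarrow> real"
  assumes A: "\<And>t. 0 \<le> A t" "\<And>t. 1 \<le> t \<Longrightarrow> t \<le> T \<Longrightarrow> A t \<le> M"
  shows "(\<Sum>t=1..T. (A t - A (Suc t)) * sqrt t) \<le> M * sqrt T"
proof -
  have "(\<Sum>t=1..T. (A t - A (Suc t)) * sqrt t) \<le> M * sqrt T - A (Suc T) * sqrt T"
    using A(2)
  proof (induction T)
    case (Suc T)
    have "A (Suc T) * (sqrt (Suc T) - sqrt T) \<le> M * (sqrt (Suc T) - sqrt T)"
      using Suc.prems by (intro mult_right_mono) auto
    then show ?case
      using Suc by (simp add: algebra_simps)
  qed simp
  moreover have "0 \<le> A (Suc T) * sqrt T"
    using A(1) by simp
  ultimately show ?thesis
    by linarith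
qed

lemma closest_point_gradient_descent_regret:
  fixes \<theta>s g :: "nat \<Rightarrow> 'a::euclidean_space"
  assumes S: "convex S" "closed S" "\<theta> \<in> S"
    and diam: "\<And>u v. u \<in> S \<Longrightarrow> v \<in> S \<Longrightarrow> norm (u - v) \<le> D"
    and start: "\<theta>s 1 \<in> S"
    and step: "\<And>t. 1 \<le> t \<Longrightarrow> \<theta>s (Suc t) = closest_point S (\<theta>s t - \<eta> t *\<^sub>R g t)"
    and \<eta>: "\<And>t. \<eta> t = D / G / sqrt t"
    and g: "\<And>t. 1 \<le> t \<Longrightarrow> t \<le> T \<Longrightarrow> norm (g t) \<le> G"
  shows "(\<Sum>t=1..T. g t \<bullet> (\<theta>s t - \<theta>)) \<le> 3 / 2 * D * G * sqrt T"
proof -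
  have iter: "\<theta>s t \<in> S" if "1 \<le> t" for t
    using closest_point_iterates_in[OF S(2) _ start step that] S(3) by blast
  show ?thesis
  proof (cases "0 < D \<and> 0 < G")
    case False
    \<comment> \<open>If \<open>G = 0\<close> the step sizes are the junk value \<open>D / 0 = 0\<close>; the bound holds since every term vanishes.\<close>
    have D0: "0 \<le> D" using diam[OF S(3) S(3)] by simp
    have degenerate: "D = 0 \<or> G = 0" if "1 \<le> T"
      using False D0 g[OF order_refl that] norm_ge_zero[of "g 1"] by linarith
    have "g t \<bullet> (\<theta>s t - \<theta>) \<le> 0" if t: "t \<in> {1..T}" for t
      using degenerate diam[OF iter S(3)] g t by force
    then have "(\<Sum>t=1..T. g t \<bullet> (\<theta>s t - \<theta>)) \<le> 0"
      by (intro sum_nonpos)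
    moreover have "3 / 2 * D * G * sqrt T = 0"
      using degenerate by (cases "T = 0") auto
    ultimately show ?thesis by linarith
  next
    case True
    define e where "e = D / G"
    have e: "0 < e" using True by (simp add: e_def)
    define A where "A t = (norm (\<theta>s t - \<theta>))\<^sup>2" for t
    have "g t \<bullet> (\<theta>s t - \<theta>) \<le> (A t - A (Suc t)) * sqrt t / (2 * e) + e * G\<^sup>2 / 2 * (1 / sqrt t)"
      if t: "t \<in> {1..T}" for t
    proof -
      have \<eta>t: "\<eta> t = e / sqrt t"
        by (simp add: \<eta> e_def)
      moreover have "0 < e / sqrt t"
        using e t by simp
      ultimately have "0 < \<eta> t" by simp
      have "g t \<bullet> (\<theta>s t - \<theta>) \<le> (A t - A (Suc t)) / (2 * \<eta> t) + \<eta> t / 2 * (norm (g t))\<^sup>2"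
        using closest_point_gradient_step_inner_le[where u = "\<theta>s t" and g = "g t", OF S \<open>0 < \<eta> t\<close>] step t
        by (simp add: A_def)
      also have "\<dots> \<le> (A t - A (Suc t)) / (2 * \<eta> t) + \<eta> t / 2 * G\<^sup>2"
        using g t \<open>0 < \<eta> t\<close> by (auto intro!: mult_left_mono power_mono)
      finally show ?thesis
        using t by (simp add: \<eta>t field_simps)
    qed
    then have "(\<Sum>t=1..T. g t \<bullet> (\<theta>s t - \<theta>))
        \<le> (\<Sum>t=1..T. (A t - A (Suc t)) * sqrt t) / (2 * e) + e * G\<^sup>2 / 2 * (\<Sum>t=1..T. 1 / sqrt t)"
      unfolding sum_divide_distrib sum_distrib_left sum.distrib[symmetric]
      by (rule sum_mono) simp
    also have "\<dots> \<le> D\<^sup>2 * sqrt T / (2 * e) + e * G\<^sup>2 / 2 * (2 * sqrt T)"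
    proof (intro add_mono divide_right_mono mult_left_mono sum_diff_mult_sqrt_le sum_inv_sqrt_le)
      show "A t \<le> D\<^sup>2" if "1 \<le> t" for t
        using diam[OF iter[OF that] S(3)] by (simp add: A_def power_mono)
    qed (use e in \<open>auto simp: A_def\<close>)
    also have "\<dots> = 3 / 2 * D * G * sqrt T"
      using True by (simp add: e_def field_simps power2_eq_square)
    finally show ?thesis .
  qed
qed

lemma closest_point_gradient_descent_almost_convex_regret:
  fixes \<theta>s g :: "nat \<Rightarrow> 'a::euclidean_space" and F :: "nat \<Rightarrow> 'a \<Rightarrow> real"
  assumes S: "convex S" "closed S" "\<theta> \<in> S"
    and diam: "\<And>u v. u \<in> S \<Longrightarrow> v \<in> S \<Longrightarrow> norm (u - v) \<le> D"
    and start: "\<theta>s 1 \<in> S"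
    and step: "\<And>t. 1 \<le> t \<Longrightarrow> \<theta>s (Suc t) = closest_point S (\<theta>s t - \<eta> t *\<^sub>R g t)"
    and \<eta>: "\<And>t. \<eta> t = D / G / sqrt t"
    and g: "\<And>t. 1 \<le> t \<Longrightarrow> t \<le> T \<Longrightarrow> norm (g t) \<le> G"
    and F: "\<And>t. 1 \<le> t \<Longrightarrow> t \<le> T \<Longrightarrow> \<theta>s t \<in> S \<Longrightarrow> F t (\<theta>s t) - F t \<theta> \<le> g t \<bullet> (\<theta>s t - \<theta>) + \<epsilon>"
  shows "(\<Sum>t=1..T. F t (\<theta>s t)) \<le> (\<Sum>t=1..T. F t \<theta>) + 3 / 2 * D * G * sqrt T + \<epsilon> * T"
proof -
  have "(\<Sum>t=1..T. F t (\<theta>s t)) - (\<Sum>t=1..T. F t \<theta>) = (\<Sum>t=1..T. F t (\<theta>s t) - F t \<theta>)"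
    by (simp add: sum_subtractf)
  also have "\<dots> \<le> (\<Sum>t=1..T. g t \<bullet> (\<theta>s t - \<theta>) + \<epsilon>)"
  proof (rule sum_mono)
    show "F t (\<theta>s t) - F t \<theta> \<le> g t \<bullet> (\<theta>s t - \<theta>) + \<epsilon>" if "t \<in> {1..T}" for t
      using that S(3) by (intro F closest_point_iterates_in[OF S(2) _ start step]) auto
  qed
  also have "\<dots> = (\<Sum>t=1..T. g t \<bullet> (\<theta>s t - \<theta>)) + \<epsilon> * T"
    by (simp add: sum.distrib)
  finally show ?thesis
    using closest_point_gradient_descent_regret[where T = T, OF S diam start step \<eta> g] by linarith
qed

lemma norm_diff_le_cball:
  fixes u v :: "'a::real_normed_vector"
  assumes "u \<in> cball c R" "v \<in> cball c R"
  shows "norm (u - v) \<le> 2 * R"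
  using assms norm_triangle_le[of "u - c" "c - v"] by (simp add: dist_norm norm_minus_commute)

section \<open>Smooth two-layer networks\<close>

definition net_deriv :: "real \<Rightarrow> (real \<Rightarrow> real) \<Rightarrow> real^('h::finite \<times> bool)^'d \<Rightarrow>
    ('p::finite,'h,'d::finite) params \<Rightarrow> ('p,'h,'d) params \<Rightarrow> real^'p \<Rightarrow> real^'d" where
  "net_deriv b \<sigma>' a \<theta> h x = (\<chi> i. 1 / b * (\<Sum>r\<in>UNIV. a$i$r * (\<sigma>' (\<theta>$i$r \<bullet> x) * (h$i$r \<bullet> x))))"

locale smooth_two_layer_net =
  fixes b C :: real and \<sigma> \<sigma>' :: "real \<Rightarrow> real" and a :: "real^('h::finite \<times> bool)^'d::finite"
  assumes b_pos: "0 < b"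
    and \<sigma>_deriv: "\<And>z. (\<sigma> has_real_derivative \<sigma>' z) (at z)"
    and \<sigma>'_lipschitz: "\<And>z z'. \<bar>\<sigma>' z - \<sigma>' z'\<bar> \<le> C * \<bar>z - z'\<bar>"
    and \<sigma>'_bounded: "\<And>z. \<bar>\<sigma>' z\<bar> \<le> C"
    and a_bounded: "\<And>i r. \<bar>a$i$r\<bar> \<le> 1"
begin

lemma C_nonneg: "0 \<le> C"
  using \<sigma>'_bounded[of 0] by linarith

lemma \<sigma>_lipschitz: "\<bar>\<sigma> u - \<sigma> v\<bar> \<le> C * \<bar>u - v\<bar>"
  using field_differentiable_bound[of UNIV \<sigma> \<sigma>' C u v] \<sigma>_deriv \<sigma>'_bounded
  by (simp add: has_field_derivative_at_within)

lemma \<sigma>_taylor: "\<bar>\<sigma> (u + w) - \<sigma> u - \<sigma>' u * w\<bar> \<le> C / 2 * w\<^sup>2"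
proof -
  have "((\<lambda>t. \<sigma> (u + t) - \<sigma>' u * t) has_real_derivative \<sigma>' (u + t) - \<sigma>' u) (at t)" for t
    by (rule derivative_eq_intros DERIV_chain2[OF \<sigma>_deriv] | simp)+
  moreover have "\<bar>\<sigma>' (u + t) - \<sigma>' u\<bar> \<le> C * \<bar>t\<bar>" for t
    using \<sigma>'_lipschitz[of "u + t" u] by simp
  ultimately have "\<bar>(\<sigma> (u + w) - \<sigma>' u * w) - (\<sigma> (u + 0) - \<sigma>' u * 0)\<bar> \<le> C / 2 * w\<^sup>2"
    by (rule abs_diff_le_half_sq_of_deriv_le)
  then show ?thesis
    by (simp add: algebra_simps)
qed

lemma abs_scaled_signed_sum_le: "\<bar>1 / b * (\<Sum>r\<in>UNIV. a$i$r * e r)\<bar> \<le> 1 / b * (\<Sum>r\<in>UNIV. \<bar>e r\<bar>)"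
proof -
  have "\<bar>\<Sum>r\<in>UNIV. a$i$r * e r\<bar> \<le> (\<Sum>r\<in>UNIV. \<bar>e r\<bar>)"
    by (rule order_trans[OF sum_abs sum_mono])
      (use a_bounded in \<open>auto simp: abs_mult intro: mult_left_le_one_le\<close>)
  then show ?thesis
    using b_pos by (simp add: abs_mult divide_right_mono)
qed

lemma net_lipschitz:
  fixes x :: "real^'p::finite"
  assumes x: "norm x = 1"
  shows "(C * sqrt CARD('h \<times> bool) / b)-lipschitz_on UNIV (\<lambda>\<theta>. net b \<sigma> a \<theta> x)"
proof (rule lipschitz_onI)
  fix \<theta> \<theta>' :: "('p,'h,'d) params"
  have "\<bar>(net b \<sigma> a \<theta> x - net b \<sigma> a \<theta>' x)$i\<bar> \<le> C / b * (\<Sum>r\<in>UNIV. norm ((\<theta> - \<theta>')$i$r))" for i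
  proof -
    have "\<bar>(net b \<sigma> a \<theta> x - net b \<sigma> a \<theta>' x)$i\<bar>
        = \<bar>1 / b * (\<Sum>r\<in>UNIV. a$i$r * (\<sigma> (\<theta>$i$r \<bullet> x) - \<sigma> (\<theta>'$i$r \<bullet> x)))\<bar>"
      by (simp add: net_def sum_subtractf right_diff_distrib)
    also have "\<dots> \<le> 1 / b * (\<Sum>r\<in>UNIV. \<bar>\<sigma> (\<theta>$i$r \<bullet> x) - \<sigma> (\<theta>'$i$r \<bullet> x)\<bar>)"
      by (rule abs_scaled_signed_sum_le)
    also have "\<dots> \<le> 1 / b * (\<Sum>r\<in>UNIV. C * norm ((\<theta> - \<theta>')$i$r))"
    proof (intro mult_left_mono sum_mono)
      fix r
      have "\<bar>\<theta>$i$r \<bullet> x - \<theta>'$i$r \<bullet> x\<bar> \<le> norm ((\<theta> - \<theta>')$i$r)"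
        using Cauchy_Schwarz_ineq2[of "(\<theta> - \<theta>')$i$r" x] x by (simp add: inner_diff_left)
      then show "\<bar>\<sigma> (\<theta>$i$r \<bullet> x) - \<sigma> (\<theta>'$i$r \<bullet> x)\<bar> \<le> C * norm ((\<theta> - \<theta>')$i$r)"
        using \<sigma>_lipschitz C_nonneg by (meson mult_left_mono order_trans)
    qed (use b_pos in simp)
    finally show ?thesis
      by (simp add: sum_distrib_left)
  qed
  then have "norm (net b \<sigma> a \<theta> x - net b \<sigma> a \<theta>' x) \<le> C / b * sqrt CARD('h \<times> bool) * norm (\<theta> - \<theta>')"
    by (rule norm_le_of_row_sums_le) (use C_nonneg b_pos in simp)
  then show "dist (net b \<sigma> a \<theta> x) (net b \<sigma> a \<theta>' x) \<le> C * sqrt CARD('h \<times> bool) / b * dist \<theta> \<theta>'"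
    by (simp add: dist_norm)
qed (use C_nonneg b_pos in simp)

lemma net_taylor:
  fixes x :: "real^'p::finite" and \<theta> h :: "('p,'h,'d) params"
  assumes x: "norm x = 1"
  shows "norm (net b \<sigma> a (\<theta> + s *\<^sub>R h) x - net b \<sigma> a \<theta> x - s *\<^sub>R net_deriv b \<sigma>' a \<theta> h x)
    \<le> C / (2 * b) * s\<^sup>2 * (norm h)\<^sup>2"
proof -
  let ?E = "net b \<sigma> a (\<theta> + s *\<^sub>R h) x - net b \<sigma> a \<theta> x - s *\<^sub>R net_deriv b \<sigma>' a \<theta> h x"
  let ?u = "\<lambda>i r. \<theta>$i$r \<bullet> x" and ?w = "\<lambda>i r. s * (h$i$r \<bullet> x)"
  have "\<bar>?E$i\<bar> \<le> C / (2 * b) * s\<^sup>2 * (\<Sum>r\<in>UNIV. (norm (h$i$r))\<^sup>2)" for i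
  proof -
    have "?E$i = 1 / b * (\<Sum>r\<in>UNIV. a$i$r * (\<sigma> (?u i r + ?w i r) - \<sigma> (?u i r) - \<sigma>' (?u i r) * ?w i r))"
      by (simp add: net_def net_deriv_def inner_add_left sum_subtractf sum.distrib sum_distrib_left algebra_simps)
    then have "\<bar>?E$i\<bar> \<le> 1 / b * (\<Sum>r\<in>UNIV. \<bar>\<sigma> (?u i r + ?w i r) - \<sigma> (?u i r) - \<sigma>' (?u i r) * ?w i r\<bar>)"
      using abs_scaled_signed_sum_le by presburger
    also have "\<dots> \<le> 1 / b * (\<Sum>r\<in>UNIV. C / 2 * (s\<^sup>2 * (norm (h$i$r))\<^sup>2))"
    proof (intro mult_left_mono sum_mono)
      fix r
      have "(h$i$r \<bullet> x)\<^sup>2 \<le> (norm (h$i$r))\<^sup>2"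
        using Cauchy_Schwarz_ineq2[of "h$i$r" x] x by (metis abs_ge_zero mult_cancel_left1 power2_abs power_mono)
      then have "(?w i r)\<^sup>2 \<le> s\<^sup>2 * (norm (h$i$r))\<^sup>2"
        by (simp add: power_mult_distrib mult_left_mono)
      then show "\<bar>\<sigma> (?u i r + ?w i r) - \<sigma> (?u i r) - \<sigma>' (?u i r) * ?w i r\<bar> \<le> C / 2 * (s\<^sup>2 * (norm (h$i$r))\<^sup>2)"
        using \<sigma>_taylor[of "?u i r" "?w i r"] C_nonneg
        by (meson divide_nonneg_pos zero_less_numeral mult_left_mono order_trans)
    qed (use b_pos in simp)
    also have "\<dots> = C / (2 * b) * s\<^sup>2 * (\<Sum>r\<in>UNIV. (norm (h$i$r))\<^sup>2)"
      by (simp add: sum_distrib_left sum_divide_distrib mult_ac)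
    finally show ?thesis .
  qed
  then have "norm ?E \<le> (\<Sum>i\<in>UNIV. C / (2 * b) * s\<^sup>2 * (\<Sum>r\<in>UNIV. (norm (h$i$r))\<^sup>2))"
    by (intro order_trans[OF norm_le_l1_cart] sum_mono)
  then show ?thesis
    by (simp only: sum_distrib_left[symmetric] sq_norm_vec_vec)
qed

lemma net_differentiable:
  fixes x :: "real^'p::finite"
  shows "(\<lambda>\<theta>. net b \<sigma> a \<theta> x) differentiable (at \<theta>)"
proof -
  have "(\<lambda>\<theta>::('p,'h,'d) params. \<sigma> (\<theta>$i$r \<bullet> x)) differentiable (at \<theta>)" for i r
  proof -
    have "(\<lambda>\<theta>::('p,'h,'d) params. \<theta>$i$r \<bullet> x) differentiable (at \<theta>)"
      by (intro bounded_linear_imp_differentiable bounded_linear_compose[OF bounded_linear_inner_left]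
          bounded_linear_compose[OF bounded_linear_vec_nth] bounded_linear_vec_nth)
    moreover have "\<sigma> differentiable (at (\<theta>$i$r \<bullet> x))"
      using \<sigma>_deriv real_differentiable_def differentiableI by blast
    ultimately show ?thesis
      using differentiable_chain_at[of "\<lambda>\<theta>::('p,'h,'d) params. \<theta>$i$r \<bullet> x" \<theta> \<sigma>] by (simp add: o_def)
  qed
  then show ?thesis
    unfolding net_def chi_sum_axis
    by (intro differentiable_sum differentiable_scaleR differentiable_mult differentiable_const ballI) auto
qed

lemma net_loss_has_grad:
  fixes x :: "real^'p::finite" and f :: "real^'d \<Rightarrow> real"
  assumes "\<And>z. f differentiable (at z)"
  shows "((\<lambda>\<theta>. f (net b \<sigma> a \<theta> x)) has_derivative (\<lambda>v. grad (\<lambda>\<theta>. f (net b \<sigma> a \<theta> x)) \<theta>0 \<bullet> v)) (at \<theta>0)"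
  using differentiable_chain_at[OF net_differentiable assms]
  by (intro has_derivative_grad) (simp add: o_def)

lemma net_loss_grad_norm_le:
  fixes x :: "real^'p::finite" and f :: "real^'d \<Rightarrow> real"
  assumes x: "norm x = 1" and f: "L-lipschitz_on UNIV f" "\<And>z. f differentiable (at z)"
  shows "norm (grad (\<lambda>\<theta>. f (net b \<sigma> a \<theta> x)) \<theta>0) \<le> L * (C * sqrt CARD('h \<times> bool) / b)"
  using net_loss_has_grad[OF f(2)]
    lipschitz_on_compose2[OF net_lipschitz[OF x] lipschitz_on_subset[OF f(1) subset_UNIV]]
  by (rule norm_le_of_has_derivative_lipschitz)

lemma net_loss_gradient_ineq:
  fixes x :: "real^'p::finite" and f :: "real^'d \<Rightarrow> real"
  assumes x: "norm x = 1"
    and f: "convex_on UNIV f" "L-lipschitz_on UNIV f" "\<And>z. f differentiable (at z)"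
  shows "f (net b \<sigma> a \<theta>0 x) - f (net b \<sigma> a \<theta> x)
    \<le> grad (\<lambda>\<theta>. f (net b \<sigma> a \<theta> x)) \<theta>0 \<bullet> (\<theta>0 - \<theta>) + L * (C / (2 * b)) * (norm (\<theta> - \<theta>0))\<^sup>2"
  by (rule convex_lipschitz_comp_gradient_ineq[OF f(1,2) net_loss_has_grad[OF f(3)] net_taylor[OF x]])

lemma net_loss_gradient_ineq_cball:
  fixes x :: "real^'p::finite" and f :: "real^'d \<Rightarrow> real"
  assumes x: "norm x = 1"
    and f: "convex_on UNIV f" "L-lipschitz_on UNIV f" "\<And>z. f differentiable (at z)"
    and \<theta>: "\<theta>0 \<in> cball c R" "\<theta> \<in> cball c R"
  shows "f (net b \<sigma> a \<theta>0 x) - f (net b \<sigma> a \<theta> x)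
    \<le> grad (\<lambda>\<theta>. f (net b \<sigma> a \<theta> x)) \<theta>0 \<bullet> (\<theta>0 - \<theta>) + 2 * C * L * R\<^sup>2 / b"
proof -
  have "L * (C / (2 * b)) * (norm (\<theta> - \<theta>0))\<^sup>2 \<le> L * (C / (2 * b)) * (2 * R)\<^sup>2"
    using lipschitz_on_nonneg[OF f(2)] norm_diff_le_cball[OF \<theta>(2,1)] C_nonneg b_pos
    by (intro mult_left_mono power_mono) auto
  moreover have "L * (C / (2 * b)) * (2 * R)\<^sup>2 = 2 * C * L * R\<^sup>2 / b"
    using b_pos by (simp add: field_simps power2_eq_square)
  ultimately show ?thesis
    using net_loss_gradient_ineq[OF x f, of \<theta>0 \<theta>] by linarith
qed

end

theorem mainTheorem4:
  fixes b C R L :: real and T :: nat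
    and \<sigma> \<sigma>' :: "real \<Rightarrow> real"
    and a :: "real^('h::finite \<times> bool)^'d::finite"
    and \<theta>1 :: "('p::finite,'h,'d) params"
    and x :: "nat \<Rightarrow> real^'p"
    and lo :: "nat \<Rightarrow> real^'d \<Rightarrow> real"
    and \<eta> :: "nat \<Rightarrow> real"
    and \<theta>s :: "nat \<Rightarrow> ('p,'h,'d) params"
  defines "m \<equiv> 2 * CARD('h)"
  assumes b_pos: "b > 0" and C_pos: "C > 0" and R_pos: "R > 0"
    and \<sigma>_deriv: "\<And>z. (\<sigma> has_real_derivative \<sigma>' z) (at z)"
    and \<sigma>'_lip: "\<And>z z'. \<bar>\<sigma>' z - \<sigma>' z'\<bar> \<le> C * \<bar>z - z'\<bar>"
    and \<sigma>'_bdd: "\<And>z. \<bar>\<sigma>' z\<bar> \<le> C"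
    and a_sign: "\<And>i r. a$i$(r,True) \<in> {-1, 1}"
    and a_bar: "\<And>i r. a$i$(r,False) = - a$i$(r,True)"
    and \<theta>1_bar: "\<And>i r. \<theta>1$i$(r,False) = \<theta>1$i$(r,True)"
    and x_sphere: "\<And>t. 1 \<le> t \<Longrightarrow> t \<le> T \<Longrightarrow> x t \<in> sphere 0 1"
    and lo_convex: "\<And>t. 1 \<le> t \<Longrightarrow> t \<le> T \<Longrightarrow> convex_on UNIV (lo t)"
    and lo_diff: "\<And>t z. 1 \<le> t \<Longrightarrow> t \<le> T \<Longrightarrow> lo t differentiable (at z)"
    and lo_lip: "\<And>t. 1 \<le> t \<Longrightarrow> t \<le> T \<Longrightarrow> L-lipschitz_on UNIV (lo t)"
    and \<eta>_def: "\<And>t. \<eta> t = 2 * R * b / (C * L * sqrt (real m)) * (1 / sqrt (real t))"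
    and \<theta>s_1: "\<theta>s 1 = \<theta>1"
    and \<theta>s_step: "\<And>t. 1 \<le> t \<Longrightarrow> \<theta>s (Suc t) =
        closest_point (cball \<theta>1 R)
          (\<theta>s t - \<eta> t *\<^sub>R grad (\<lambda>\<theta>. lo t (net b \<sigma> a \<theta> (x t))) (\<theta>s t))"
  shows "\<forall>\<theta>\<in>cball \<theta>1 R.
     (\<Sum>t=1..T. lo t (net b \<sigma> a (\<theta>s t) (x t)))
       \<le> (\<Sum>t=1..T. lo t (net b \<sigma> a \<theta> (x t)))
          + 3 * C * L * R * sqrt (real m * real T) / b
          + 2 * C * L * R^2 / b * real T"
proof
  fix \<theta> assume \<theta>: "\<theta> \<in> cball \<theta>1 R"
  interpret smooth_two_layer_net b C \<sigma> \<sigma>' a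
  proof
    show "\<bar>a$i$r\<bar> \<le> 1" for i r
      using a_sign[of i "fst r"] a_bar[of i "fst r"] by (cases r; cases "snd r") auto
  qed (use b_pos \<sigma>_deriv \<sigma>'_lip \<sigma>'_bdd in auto)
  define g where "g t = grad (\<lambda>\<theta>. lo t (net b \<sigma> a \<theta> (x t))) (\<theta>s t)" for t
  define G where "G = L * (C * sqrt CARD('h \<times> bool) / b)"
  have "(\<Sum>t=1..T. lo t (net b \<sigma> a (\<theta>s t) (x t)))
      \<le> (\<Sum>t=1..T. lo t (net b \<sigma> a \<theta> (x t))) + 3 / 2 * (2 * R) * G * sqrt T + 2 * C * L * R\<^sup>2 / b * T"
  proof (rule closest_point_gradient_descent_almost_convex_regret[OF convex_cball closed_cball \<theta>
        norm_diff_le_cball])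
    show "\<theta>s 1 \<in> cball \<theta>1 R"
      using \<theta>s_1 R_pos by simp
    show "\<theta>s (Suc t) = closest_point (cball \<theta>1 R) (\<theta>s t - \<eta> t *\<^sub>R g t)" if "1 \<le> t" for t
      using \<theta>s_step[OF that] by (simp add: g_def)
    show "\<eta> t = 2 * R / G / sqrt t" for t
      by (simp add: \<eta>_def G_def m_def card_prod)
    show "norm (g t) \<le> G" if "1 \<le> t" "t \<le> T" for t
      unfolding g_def G_def using x_sphere[OF that] lo_lip[OF that] lo_diff[OF that]
      by (intro net_loss_grad_norm_le) auto
    show "lo t (net b \<sigma> a (\<theta>s t) (x t)) - lo t (net b \<sigma> a \<theta> (x t)) \<le> g t \<bullet> (\<theta>s t - \<theta>) + 2 * C * L * R\<^sup>2 / b"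
      if "1 \<le> t" "t \<le> T" "\<theta>s t \<in> cball \<theta>1 R" for t
      unfolding g_def
      using net_loss_gradient_ineq_cball[OF _ lo_convex[OF that(1,2)] lo_lip[OF that(1,2)] lo_diff[OF that(1,2)]
          that(3) \<theta>] x_sphere[OF that(1,2)]
      by simp
  qed
  moreover have "3 / 2 * (2 * R) * G * sqrt T = 3 * C * L * R * sqrt (real m * real T) / b"
    by (simp add: G_def m_def card_prod real_sqrt_mult)
  ultimately show "(\<Sum>t=1..T. lo t (net b \<sigma> a (\<theta>s t) (x t)))
       \<le> (\<Sum>t=1..T. lo t (net b \<sigma> a \<theta> (x t))) + 3 * C * L * R * sqrt (real m * real T) / b
          + 2 * C * L * R^2 / b * real T"
    by linarith
qed

end
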